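(* Let $(\varphi_k)_{k\ge0}$ be nonnegative weights with $\varphi_0>0$. Let $\mathcal M=\Psi\circ\Phi$ be the map (defined in the context) from increasing diamonds of size $n$ to ordered increasing bucket trees of size $n$ with bucket size $2$. Then for every increasing diamond $F$, the number of inner nodes of $F$ equals the number of nodes of capacity one in $\mathcal M(F)$. Consequently, if $I_n$ denotes the number of inner nodes of a random increasing diamond of size $n$ and $N_n$ the number of capacity-one nodes of a random ordered increasing bucket tree of size $n$ with bucket size 2 (both chosen with probability proportional to weight, with $\psi_1=1$), then $I_n$ and $N_n$ are equal in distribution for every $n\ge1$.
   Context: Increasing diamonds are defined recursively on a finite set $L$ of integer labels: if $|L|=1$ it is a single vertex with that label (weight 1); if $|L|\ge2$ it consists of a source vertex labelled $\min L$, a sink vertex labelled $\max L$, and an ordered sequence $(F_1,\dots,F_r)$, $r\ge0$, of increasing diamonds whose label sets partition $L\setminus\{\min L,\max L\}$, with weight $\varphi_r\prod_i w(F_i)$; size is $|L|$. Node types: if $|L|=1$ its unique vertex is an inner node; otherwise the source is a small node, the sink a large node, and the types of the vertices of $F_1,\dots,F_r$ are assigned recursively. Ordered increasing bucket trees with $b=2$: plane rooted trees whose nodes have capacity 1 or 2 (nodes with children have capacity 2), labels $1,\dots,n$ distributed with each node holding as many labels as its capacity and every label of a node smaller than the labels in its children; weight = product of $\varphi_{d^+(v)}$ over capacity-2 nodes ($d^+(v)$ = number of children), capacity-1 nodes have weight $\psi_1=1$. The map $\mathcal M$: First $\Phi$: if $F$ has one vertex, $\Phi(F)$ is a single bucket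 containing its label; otherwise $\Phi(F)$ has root bucket containing $\min L$ and $\max L$, with ordered subtrees $\Phi(F_1),\dots,\Phi(F_r)$. Then $\Psi$ applied to a bucket-labelled plane tree $\hat T$: if its size is 1, return it; otherwise let $\ell_1<\dots<\ell_n$ be its labels, relabel every label by the permutation fixing $\ell_1$ and mapping $\ell_2\mapsto\ell_3\mapsto\cdots\mapsto\ell_n\mapsto\ell_2$, then keep the root bucket and replace each root subtree $\hat T_i$ (in order) by $\Psi(\hat T_i)$. *)

theory Defs
  imports Complex_Main
begin

text \<open>DSingle a : a single (inner) vertex labelled a.
  Dia a b Fs : source labelled a, sink labelled b, ordered sequence Fs of sub-diamonds.\<close>
datatype diamond = DSingle int | Dia int int "diamond list"

fun dlabels :: "diamond \<Rightarrow> int set" where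
  "dlabels (DSingle a) = {a}"
| "dlabels (Dia a b Fs) = {a, b} \<union> (\<Union>F\<in>set Fs. dlabels F)"

fun is_diamond :: "diamond \<Rightarrow> bool" where
  "is_diamond (DSingle a) = True"
| "is_diamond (Dia a b Fs) =
     (a < b \<and>
      (\<forall>F\<in>set Fs. \<forall>x\<in>dlabels F. a < x \<and> x < b) \<and>
      (\<forall>i<length Fs. \<forall>j<length Fs. i \<noteq> j \<longrightarrow> dlabels (Fs ! i) \<inter> dlabels (Fs ! j) = {}) \<and>
      (\<forall>F\<in>set Fs. is_diamond F))"

fun dweight :: "(nat \<Rightarrow> real) \<Rightarrow> diamond \<Rightarrow> real" where
  "dweight \<phi> (DSingle a) = 1"
| "dweight \<phi> (Dia a b Fs) = \<phi> (length Fs) * prod_list (map (dweight \<phi>) Fs)"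

fun inner_nodes :: "diamond \<Rightarrow> nat" where
  "inner_nodes (DSingle a) = 1"
| "inner_nodes (Dia a b Fs) = sum_list (map inner_nodes Fs)"

definition diamonds_of_size :: "nat \<Rightarrow> diamond set" where
  "diamonds_of_size n = {F. is_diamond F \<and> dlabels F = {1..int n}}"

text \<open>BNode B ts : a node whose bucket holds the label set B, with ordered children ts.
  The capacity of a node is the number of labels it holds.\<close>
datatype btree = BNode "int set" "btree list"

fun blabels :: "btree \<Rightarrow> int set" where
  "blabels (BNode B ts) = B \<union> (\<Union>t\<in>set ts. blabels t)"

fun bmap :: "(int \<Rightarrow> int) \<Rightarrow> btree \<Rightarrow> btree" where
  "bmap f (BNode B ts) = BNode (f ` B) (map (bmap f) ts)"

lemma size_bmap[simp]: "size (bmap f t) = size t"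
proof (induction t)
  case (BNode B ts)
  have "map (size \<circ> bmap f) ts = map size ts" using BNode.IH by auto
  then have "size_list size (map (bmap f) ts) = size_list size ts"
    by (metis size_list_map size_list_conv_sum_list)
  then show ?case by simp
qed

fun is_bucket_tree :: "btree \<Rightarrow> bool" where
  "is_bucket_tree (BNode B ts) =
     ((card B = 1 \<or> card B = 2) \<and>
      (ts \<noteq> [] \<longrightarrow> card B = 2) \<and>
      (\<forall>t\<in>set ts. \<forall>x\<in>B. \<forall>y\<in>blabels t. x < y) \<and>
      (\<forall>i<length ts. \<forall>j<length ts. i \<noteq> j \<longrightarrow> blabels (ts ! i) \<inter> blabels (ts ! j) = {}) \<and>
      (\<forall>t\<in>set ts. is_bucket_tree t))"

fun bweight :: "(nat \<Rightarrow> real) \<Rightarrow> btree \<Rightarrow> real" where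
  "bweight \<phi> (BNode B ts) =
     (if card B = 2 then \<phi> (length ts) else 1) * prod_list (map (bweight \<phi>) ts)"

fun cap_one_nodes :: "btree \<Rightarrow> nat" where
  "cap_one_nodes (BNode B ts) = (if card B = 1 then 1 else 0) + sum_list (map cap_one_nodes ts)"

definition bucket_trees_of_size :: "nat \<Rightarrow> btree set" where
  "bucket_trees_of_size n = {T. is_bucket_tree T \<and> blabels T = {1..int n}}"

fun Phi :: "diamond \<Rightarrow> btree" where
  "Phi (DSingle a) = BNode {a} []"
| "Phi (Dia a b Fs) = BNode {a, b} (map Phi Fs)"

text \<open>For a finite label set with sorted elements l1 < l2 < ... < ln, the permutation fixing
  l1 and mapping l2 -> l3 -> ... -> ln -> l2.\<close>
definition cyc_perm :: "int set \<Rightarrow> int \<Rightarrow> int" where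
  "cyc_perm S x =
     (let ys = tl (sorted_list_of_set S) in
      case map_of (zip ys (rotate1 ys)) x of None \<Rightarrow> x | Some y \<Rightarrow> y)"

function Psi :: "btree \<Rightarrow> btree" where
  "Psi (BNode B ts) =
     (if card (blabels (BNode B ts)) = 1 then BNode B ts
      else (let \<sigma> = cyc_perm (blabels (BNode B ts))
            in BNode (\<sigma> ` B) (map (\<lambda>t. Psi (bmap \<sigma> t)) ts)))"
  by pat_completeness auto
termination
  by (relation "measure size") (auto intro!: le_imp_less_Suc size_list_estimation')

definition M :: "diamond \<Rightarrow> btree" where
  "M F = Psi (Phi F)"

end

theory Submission
  imports Defs
begin

(*
  Phi turns exactly the inner vertices into buckets of size one, and Psi only relabels
  subtrees by injective maps, so M preserves the number of capacity-one nodes.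

  For the distributions, diamonds and bucket trees on the same label set L are matched by a
  bijection preserving weight and statistic.  A diamond with source a and sink b becomes the
  tree with root bucket {a, a'}, where a' is the successor of a in L, whose subtrees are the
  images of the components with every label moved to its successor in L.  The successor map
  is an order isomorphism from L - {b} onto L - {a}, so the components become increasing
  trees with labels above a'; the inverse moves labels to their predecessors.  Numerators
  and denominators then agree separately.
*)

lemma inj_map_of_zip_else_id:
  assumes "distinct xs" "distinct ys" "length xs = length ys" "set xs = set ys"
  shows "inj (\<lambda>x. case map_of (zip xs ys) x of None \<Rightarrow> x | Some y \<Rightarrow> y)" (is "inj ?f")
proof (rule injI)
  have on_list: "?f (xs ! i) = ys ! i" if "i < length xs" for i
    using map_of_zip_nth[OF assms(3,1)] that assms(3) by simp
  have off_list: "?f z = z" if "z \<notin> set xs" for z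
  proof -
    have "map_of (zip xs ys) z = None" using that assms(3) by simp
    then show ?thesis by simp
  qed
  fix x y assume eq: "?f x = ?f y"
  show "x = y"
  proof (cases "x \<in> set xs"; cases "y \<in> set xs")
    assume "x \<in> set xs" "y \<in> set xs"
    then obtain i j where "i < length xs" "x = xs ! i" "j < length xs" "y = xs ! j"
      by (auto simp: in_set_conv_nth)
    then show "x = y"
      using eq on_list assms(2,3) nth_eq_iff_index_eq by metis
  next
    assume "x \<in> set xs" "y \<notin> set xs"
    then show "x = y"
      using eq on_list off_list assms(3,4) by (metis in_set_conv_nth nth_mem)
  next
    assume "x \<notin> set xs" "y \<in> set xs"
    then show "x = y"
      using eq on_list off_list assms(3,4) by (metis in_set_conv_nth nth_mem)
  qed (use eq off_list in simp)
qed

lemma inj_cyc_perm: "inj (cyc_perm S)"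
  unfolding cyc_perm_def Let_def
  by (rule inj_map_of_zip_else_id) (simp_all add: distinct_tl)

lemma cap_one_nodes_bmap:
  "inj_on f (blabels t) \<Longrightarrow> cap_one_nodes (bmap f t) = cap_one_nodes t"
proof (induction t)
  case (BNode B ts)
  then have "card (f ` B) = card B" by (auto intro: card_image inj_on_subset)
  moreover have "map (cap_one_nodes \<circ> bmap f) ts = map cap_one_nodes ts"
    using BNode by (auto intro: inj_on_subset)
  ultimately show ?case by (simp del: map_eq_conv)
qed

lemma cap_one_nodes_Psi: "cap_one_nodes (Psi t) = cap_one_nodes t"
proof (induction t rule: Psi.induct)
  case (1 B ts)
  show ?case
  proof (cases "card (blabels (BNode B ts)) = 1")
    case False
    define \<sigma> where "\<sigma> = cyc_perm (blabels (BNode B ts))"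
    have inj: "inj \<sigma>" unfolding \<sigma>_def by (rule inj_cyc_perm)
    have Psi_eq: "Psi (BNode B ts) = BNode (\<sigma> ` B) (map (\<lambda>t. Psi (bmap \<sigma> t)) ts)"
      using False by (simp add: \<sigma>_def Let_def)
    have "card (\<sigma> ` B) = card B"
      using inj by (simp add: card_image inj_on_subset)
    moreover have "map (cap_one_nodes \<circ> (\<lambda>t. Psi (bmap \<sigma> t))) ts = map cap_one_nodes ts"
      using 1[OF False \<sigma>_def] inj by (auto simp: cap_one_nodes_bmap inj_on_subset)
    ultimately show ?thesis unfolding Psi_eq by (simp del: map_eq_conv)
  qed simp
qed

lemma inner_nodes_eq_cap_one_nodes_Phi:
  "is_diamond F \<Longrightarrow> inner_nodes F = cap_one_nodes (Phi F)"
proof (induction F)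
  case (Dia a b Fs)
  then have "map inner_nodes Fs = map (cap_one_nodes \<circ> Phi) Fs" by auto
  with \<open>is_diamond (Dia a b Fs)\<close> show ?case by (simp del: map_eq_conv)
qed simp

lemma inner_nodes_eq_cap_one_nodes_M: "is_diamond F \<Longrightarrow> inner_nodes F = cap_one_nodes (M F)"
  by (simp add: M_def cap_one_nodes_Psi inner_nodes_eq_cap_one_nodes_Phi)

definition succ_in :: "'a::linorder set \<Rightarrow> 'a \<Rightarrow> 'a" where
  "succ_in L x = Min {y \<in> L. x < y}"

definition pred_in :: "'a::linorder set \<Rightarrow> 'a \<Rightarrow> 'a" where
  "pred_in L y = Max {x \<in> L. x < y}"

lemma succ_in_bounds:
  assumes "finite L" "x \<in> L" "y \<in> L" "x < y"
  shows "succ_in L x \<in> L" "x < succ_in L x" "succ_in L x \<le> y"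
proof -
  have "{z \<in> L. x < z} \<noteq> {}" "finite {z \<in> L. x < z}" using assms by auto
  from Min_in[OF this(2,1)] show "succ_in L x \<in> L" "x < succ_in L x"
    unfolding succ_in_def by auto
  show "succ_in L x \<le> y" unfolding succ_in_def using assms by (intro Min_le) auto
qed

lemma pred_in_bounds:
  assumes "finite L" "x \<in> L" "y \<in> L" "x < y"
  shows "pred_in L y \<in> L" "pred_in L y < y" "x \<le> pred_in L y"
proof -
  have "{z \<in> L. z < y} \<noteq> {}" "finite {z \<in> L. z < y}" using assms by auto
  from Max_in[OF this(2,1)] show "pred_in L y \<in> L" "pred_in L y < y"
    unfolding pred_in_def by auto
  show "x \<le> pred_in L y" unfolding pred_in_def using assms by (intro Max_ge) auto
qed

lemma pred_in_succ_in:
  assumes "finite L" "x \<in> L" "y \<in> L" "x < y"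
  shows "pred_in L (succ_in L x) = x"
  unfolding pred_in_def
proof (rule Max_eqI)
  show "x \<in> {z \<in> L. z < succ_in L x}" using succ_in_bounds[OF assms] assms by auto
  show "z \<le> x" if "z \<in> {z \<in> L. z < succ_in L x}" for z
    using that succ_in_bounds(3)[OF assms(1,2)] by force
qed (use assms in auto)

lemma succ_in_pred_in:
  assumes "finite L" "x \<in> L" "y \<in> L" "x < y"
  shows "succ_in L (pred_in L y) = y"
  unfolding succ_in_def
proof (rule Min_eqI)
  show "y \<in> {z \<in> L. pred_in L y < z}" using pred_in_bounds[OF assms] assms by auto
  show "y \<le> z" if "z \<in> {z \<in> L. pred_in L y < z}" for z
    using that pred_in_bounds(3)[OF assms(1) _ assms(3)] by force
qed (use assms in auto)

lemma strict_mono_on_succ_in: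
  assumes "finite L"
  shows "strict_mono_on (L - {Max L}) (succ_in L)"
proof (rule strict_mono_onI)
  fix x y assume "x \<in> L - {Max L}" "y \<in> L - {Max L}" "x < y"
  moreover from this have "y < Max L" "Max L \<in> L"
    using assms Max_in[of L] by (auto simp: order.not_eq_order_implies_strict simp del: Max_in)
  ultimately have "succ_in L x \<le> y" "y < succ_in L y"
    using succ_in_bounds[OF assms] by blast+
  then show "succ_in L x < succ_in L y" by simp
qed

lemma strict_mono_on_pred_in:
  assumes "finite L"
  shows "strict_mono_on (L - {Min L}) (pred_in L)"
proof (rule strict_mono_onI)
  fix x y assume "x \<in> L - {Min L}" "y \<in> L - {Min L}" "x < y"
  moreover from this have "Min L < x" "Min L \<in> L"
    using assms Min_in[of L] by (auto simp: order.not_eq_order_implies_strict simp del: Min_in)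
  ultimately have "pred_in L x < x" "x \<le> pred_in L y"
    using pred_in_bounds[OF assms] by blast+
  then show "pred_in L x < pred_in L y" by simp
qed

lemma bij_betw_succ_in_pred_in:
  assumes "finite L"
  shows "bij_betw (succ_in L) (L - {Max L}) (L - {Min L})"
    and "bij_betw (pred_in L) (L - {Min L}) (L - {Max L})"
proof -
  have below_Max: "x \<in> L" "x < Max L" "Max L \<in> L" if "x \<in> L - {Max L}" for x
    using that assms Max_in[of L] by (auto simp: order.not_eq_order_implies_strict simp del: Max_in)
  have above_Min: "y \<in> L" "Min L < y" "Min L \<in> L" if "y \<in> L - {Min L}" for y
    using that assms Min_in[of L] by (auto simp: order.not_eq_order_implies_strict simp del: Min_in)
  have succ_into: "succ_in L ` (L - {Max L}) \<subseteq> L - {Min L}"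
  proof
    fix y assume "y \<in> succ_in L ` (L - {Max L})"
    then obtain x where x: "x \<in> L - {Max L}" and y: "y = succ_in L x" by blast
    have "Min L \<le> x" using x assms by simp
    then show "y \<in> L - {Min L}"
      using succ_in_bounds(1,2)[OF assms below_Max(1,3,2)[OF x]] y by auto
  qed
  have pred_into: "pred_in L ` (L - {Min L}) \<subseteq> L - {Max L}"
  proof
    fix x assume "x \<in> pred_in L ` (L - {Min L})"
    then obtain y where y: "y \<in> L - {Min L}" and x: "x = pred_in L y" by blast
    have "y \<le> Max L" using y assms by simp
    then show "x \<in> L - {Max L}"
      using pred_in_bounds(1,2)[OF assms above_Min(3,1,2)[OF y]] x by auto
  qed
  have pred_succ: "\<forall>x \<in> L - {Max L}. pred_in L (succ_in L x) = x"
    using pred_in_succ_in[OF assms] below_Max by blast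
  have succ_pred: "\<forall>y \<in> L - {Min L}. succ_in L (pred_in L y) = y"
    using succ_in_pred_in[OF assms] above_Min by blast
  show "bij_betw (succ_in L) (L - {Max L}) (L - {Min L})"
    by (rule bij_betw_byWitness[OF pred_succ succ_pred succ_into pred_into])
  show "bij_betw (pred_in L) (L - {Min L}) (L - {Max L})"
    by (rule bij_betw_byWitness[OF succ_pred pred_succ pred_into succ_into])
qed

lemma blabels_bmap: "blabels (bmap f t) = f ` blabels t"
  by (induction t) (auto simp: image_Union)

lemma bmap_comp: "bmap g (bmap f t) = bmap (g \<circ> f) t"
  by (induction t) (auto simp: image_comp)

lemma bmap_id_on: "(\<And>x. x \<in> blabels t \<Longrightarrow> f x = x) \<Longrightarrow> bmap f t = t"
proof (induction t)
  case (BNode B ts)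
  then show ?case by (auto intro: map_idI)
qed

lemma bweight_bmap: "inj_on f (blabels t) \<Longrightarrow> bweight \<phi> (bmap f t) = bweight \<phi> t"
proof (induction t)
  case (BNode B ts)
  then have "card (f ` B) = card B" by (auto intro: card_image inj_on_subset)
  moreover have "map (bweight \<phi> \<circ> bmap f) ts = map (bweight \<phi>) ts"
    using BNode by (auto intro: inj_on_subset)
  ultimately show ?case by (simp del: map_eq_conv)
qed

lemma disjoint_nth_image:
  assumes "inj_on f (\<Union>x\<in>set xs. A x)"
    and "\<forall>i<length xs. \<forall>j<length xs. i \<noteq> j \<longrightarrow> A (xs ! i) \<inter> A (xs ! j) = {}"
    and "i < length xs" "j < length xs" "i \<noteq> j"
  shows "f ` A (xs ! i) \<inter> f ` A (xs ! j) = {}"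
proof -
  have "f ` A (xs ! i) \<inter> f ` A (xs ! j) = f ` (A (xs ! i) \<inter> A (xs ! j))"
    using assms(1,3,4) by (intro inj_on_image_Int[symmetric]) (auto intro: nth_mem)
  then show ?thesis using assms(2-5) by simp
qed

lemma is_bucket_tree_bmap:
  "is_bucket_tree t \<Longrightarrow> strict_mono_on (blabels t) f \<Longrightarrow> is_bucket_tree (bmap f t)"
proof (induction t)
  case (BNode B ts)
  then have inj: "inj_on f (blabels (BNode B ts))" by (simp add: strict_mono_on_imp_inj_on)
  have "card (f ` B) = card B" using inj by (auto intro: card_image inj_on_subset)
  moreover have "f x < f y" if "t \<in> set ts" "x \<in> B" "y \<in> blabels t" for t x y
    using BNode.prems that by (intro strict_mono_onD[of "blabels (BNode B ts)" f]) auto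
  moreover have "f ` blabels (ts ! i) \<inter> f ` blabels (ts ! j) = {}"
    if "i < length ts" "j < length ts" "i \<noteq> j" for i j
    using BNode.prems that inj by (intro disjoint_nth_image) (auto intro: inj_on_subset)
  moreover have "is_bucket_tree (bmap f t)" if "t \<in> set ts" for t
    using BNode that by (auto intro: monotone_on_subset)
  ultimately show ?case using BNode.prems by (auto simp: blabels_bmap)
qed

lemma finite_blabels: "is_bucket_tree t \<Longrightarrow> finite (blabels t)"
proof (induction t)
  case (BNode B ts)
  then have "finite B" by (auto intro: card_ge_0_finite)
  with BNode show ?case by auto
qed

lemma finite_dlabels: "finite (dlabels F)"
  by (induction F) auto

lemma is_diamond_Dia_labels:
  assumes "is_diamond (Dia a b Fs)"
  defines "L \<equiv> dlabels (Dia a b Fs)"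
  shows "finite L" "Min L = a" "Max L = b" "(\<Union>G\<in>set Fs. dlabels G) = L - {a, b}"
proof -
  have inner: "a < x" "x < b" if "G \<in> set Fs" "x \<in> dlabels G" for G x
    using assms(1) that by auto
  have "a < b" using assms(1) by simp
  have L: "L = insert a (insert b (\<Union>G\<in>set Fs. dlabels G))" unfolding L_def by simp
  show "finite L" unfolding L_def by (rule finite_dlabels)
  show "Min L = a"
    by (rule Min_eqI) (use \<open>finite L\<close> inner \<open>a < b\<close> in \<open>force simp: L\<close>)+
  show "Max L = b"
    by (rule Max_eqI) (use \<open>finite L\<close> inner \<open>a < b\<close> in \<open>force simp: L\<close>)+
  show "(\<Union>G\<in>set Fs. dlabels G) = L - {a, b}"
    using inner unfolding L by fastforce
qed

fun btree_of :: "diamond \<Rightarrow> btree" where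
  "btree_of (DSingle a) = BNode {a} []"
| "btree_of (Dia a b Fs) =
     (let s = succ_in (dlabels (Dia a b Fs)) in BNode {a, s a} (map (bmap s \<circ> btree_of) Fs))"

lemma btree_of_Dia:
  assumes "is_diamond (Dia a b Fs)"
  defines "L \<equiv> dlabels (Dia a b Fs)" and "s \<equiv> succ_in (dlabels (Dia a b Fs))"
  shows "btree_of (Dia a b Fs) = BNode {a, s a} (map (bmap s \<circ> btree_of) Fs)"
    "s a \<in> L" "a < s a" "strict_mono_on (L - {b}) s"
    "s ` (\<Union>G\<in>set Fs. dlabels G) = L - {a, s a}"
    "\<And>G. G \<in> set Fs \<Longrightarrow> dlabels G \<subseteq> L - {b}"
proof -
  note L = is_diamond_Dia_labels[OF assms(1), folded L_def]
  have s: "s = succ_in L" unfolding s_def L_def ..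
  show "btree_of (Dia a b Fs) = BNode {a, s a} (map (bmap s \<circ> btree_of) Fs)"
    unfolding s_def by simp
  have "a \<in> L" "b \<in> L" unfolding L_def by simp_all
  have "a < b" using assms(1) by simp
  show "s a \<in> L" "a < s a"
    using succ_in_bounds(1,2)[OF L(1) \<open>a \<in> L\<close> \<open>b \<in> L\<close> \<open>a < b\<close>] unfolding s .
  show "strict_mono_on (L - {b}) s"
    using strict_mono_on_succ_in[OF L(1)] unfolding L(3) s .
  have bij: "bij_betw s (L - {b}) (L - {a})"
    using bij_betw_succ_in_pred_in(1)[OF L(1)] unfolding L(2,3) s .
  have "s ` (\<Union>G\<in>set Fs. dlabels G) = s ` (L - {b} - {a})"
    unfolding L(4) by (rule arg_cong[where f = "image s"]) blast
  also have "\<dots> = s ` (L - {b}) - s ` {a}"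
    using \<open>a \<in> L\<close> \<open>a < b\<close>
    by (intro inj_on_image_set_diff[OF bij_betw_imp_inj_on[OF bij]]) auto
  also have "\<dots> = L - {a, s a}"
    unfolding bij_betw_imp_surj_on[OF bij] by blast
  finally show "s ` (\<Union>G\<in>set Fs. dlabels G) = L - {a, s a}" .
  show "dlabels G \<subseteq> L - {b}" if "G \<in> set Fs" for G
    using that L(4) by blast
qed

lemma blabels_btree_of: "is_diamond F \<Longrightarrow> blabels (btree_of F) = dlabels F"
proof (induction F)
  case (Dia a b Fs)
  define L where "L = dlabels (Dia a b Fs)"
  define s where "s = succ_in L"
  note facts = btree_of_Dia[OF Dia.prems, folded L_def, folded s_def]
  have "blabels (btree_of (Dia a b Fs)) = {a, s a} \<union> s ` (\<Union>G\<in>set Fs. dlabels G)"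
    using Dia unfolding facts(1) by (auto simp: blabels_bmap)
  also have "\<dots> = L"
    using facts(2,5) unfolding L_def by auto
  finally show ?case unfolding L_def .
qed simp

lemma is_bucket_tree_btree_of: "is_diamond F \<Longrightarrow> is_bucket_tree (btree_of F)"
proof (induction F)
  case (Dia a b Fs)
  define L where "L = dlabels (Dia a b Fs)"
  define s where "s = succ_in L"
  note facts = btree_of_Dia[OF Dia.prems, folded L_def, folded s_def]
  have labels: "blabels (bmap s (btree_of G)) = s ` dlabels G" if "G \<in> set Fs" for G
    using Dia that by (simp add: blabels_bmap blabels_btree_of)
  have "card {a, s a} = 2" using facts(3) by simp
  moreover have "x < s z" if "x \<in> {a, s a}" "G \<in> set Fs" "z \<in> dlabels G" for x G z
  proof -
    have "a \<in> L - {b}" "a < z" using Dia.prems that(2,3) unfolding L_def by auto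
    moreover have "z \<in> L - {b}" using facts(6)[OF that(2)] that(3) by blast
    ultimately have "s a < s z"
      using facts(4) by (auto intro: strict_mono_onD)
    then show ?thesis using that(1) facts(3) by auto
  qed
  moreover have "s ` dlabels (Fs ! i) \<inter> s ` dlabels (Fs ! j) = {}"
    if "i < length Fs" "j < length Fs" "i \<noteq> j" for i j
  proof (rule disjoint_nth_image[OF _ _ that])
    have "(\<Union>G\<in>set Fs. dlabels G) \<subseteq> L - {b}" using facts(6) by blast
    then show "inj_on s (\<Union>G\<in>set Fs. dlabels G)"
      by (rule inj_on_subset[OF strict_mono_on_imp_inj_on[OF facts(4)]])
  qed (use Dia.prems in simp)
  moreover have "is_bucket_tree (bmap s (btree_of G))" if "G \<in> set Fs" for G
    using Dia that facts(4,6)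
    by (intro is_bucket_tree_bmap) (auto simp: blabels_btree_of intro: monotone_on_subset)
  ultimately show ?case
    using labels unfolding facts(1) by simp
qed simp

lemma bweight_btree_of: "is_diamond F \<Longrightarrow> bweight \<phi> (btree_of F) = dweight \<phi> F"
proof (induction F)
  case (Dia a b Fs)
  define L where "L = dlabels (Dia a b Fs)"
  define s where "s = succ_in L"
  note facts = btree_of_Dia[OF Dia.prems, folded L_def, folded s_def]
  have inj: "inj_on s (blabels (btree_of G))" if "G \<in> set Fs" for G
    using Dia.prems that inj_on_subset[OF strict_mono_on_imp_inj_on[OF facts(4)] facts(6)]
    by (simp add: blabels_btree_of)
  have "card {a, s a} = 2" using facts(3) by simp
  moreover have "map (bweight \<phi> \<circ> (bmap s \<circ> btree_of)) Fs = map (dweight \<phi>) Fs"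
    using Dia inj by (simp add: bweight_bmap)
  ultimately show ?case unfolding facts(1) by (simp del: map_eq_conv)
qed simp

lemma cap_one_nodes_btree_of: "is_diamond F \<Longrightarrow> cap_one_nodes (btree_of F) = inner_nodes F"
proof (induction F)
  case (Dia a b Fs)
  define L where "L = dlabels (Dia a b Fs)"
  define s where "s = succ_in L"
  note facts = btree_of_Dia[OF Dia.prems, folded L_def, folded s_def]
  have inj: "inj_on s (blabels (btree_of G))" if "G \<in> set Fs" for G
    using Dia.prems that inj_on_subset[OF strict_mono_on_imp_inj_on[OF facts(4)] facts(6)]
    by (simp add: blabels_btree_of)
  have "card {a, s a} = 2" using facts(3) by simp
  moreover have "map (cap_one_nodes \<circ> (bmap s \<circ> btree_of)) Fs = map inner_nodes Fs"
    using Dia inj by (simp add: cap_one_nodes_bmap)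
  ultimately show ?case unfolding facts(1) by (simp del: map_eq_conv)
qed simp

function diamond_of :: "btree \<Rightarrow> diamond" where
  "diamond_of (BNode B ts) =
     (if card B = 1 then DSingle (Min B)
      else let L = blabels (BNode B ts)
           in Dia (Min L) (Max L) (map (\<lambda>t. diamond_of (bmap (pred_in L) t)) ts))"
  by pat_completeness auto
termination
  by (relation "measure size") (auto intro!: le_imp_less_Suc size_list_estimation')

lemma is_bucket_tree_BNode_labels:
  assumes "is_bucket_tree (BNode B ts)" "card B \<noteq> 1"
  defines "L \<equiv> blabels (BNode B ts)" and "p \<equiv> pred_in (blabels (BNode B ts))"
  obtains x y where "B = {x, y}" "finite L" "Min L = x" "succ_in L x = y"
    "(\<Union>t\<in>set ts. blabels t) = L - {x, y}" "strict_mono_on (L - {x}) p"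
    "p ` (L - {x, y}) = L - {x, Max L}" "x < Max L" "Max L \<in> L"
    "\<And>t. t \<in> set ts \<Longrightarrow> is_bucket_tree (bmap p t)"
proof -
  have "card B = 2" using assms(1,2) by simp
  then obtain x y where B: "B = {x, y}" "x < y"
    by (auto simp: card_2_iff) (metis insert_commute linorder_neqE)
  define U where "U = (\<Union>t\<in>set ts. blabels t)"
  have above: "y < z" if "z \<in> U" for z
    using assms(1) that B unfolding U_def by auto
  have L: "L = insert x (insert y U)" unfolding L_def U_def B(1) by auto
  have fin: "finite L" unfolding L_def by (rule finite_blabels[OF assms(1)])
  have p: "p = pred_in L" unfolding p_def L_def ..
  have Min: "Min L = x"
    by (rule Min_eqI) (use fin above B(2) in \<open>force simp: L\<close>)+
  have succ: "succ_in L x = y"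
    unfolding succ_in_def by (rule Min_eqI) (use fin above B(2) in \<open>force simp: L\<close>)+
  have U: "U = L - {x, y}" using above B(2) unfolding L by fastforce
  have "y \<in> L" unfolding L by simp
  then have Max: "Max L \<in> L" "y \<le> Max L" using Max_in[OF fin] Max_ge[OF fin] by auto
  have bij: "bij_betw p (L - {x}) (L - {Max L})"
    using bij_betw_succ_in_pred_in(2)[OF fin] unfolding Min p .
  have "p y = x"
    unfolding p using pred_in_succ_in[of L x y] fin B(2) succ by (simp add: L)
  have "p ` (L - {x, y}) = p ` (L - {x} - {y})" by (rule arg_cong[where f = "image p"]) blast
  also have "\<dots> = p ` (L - {x}) - p ` {y}"
    using B(2) by (intro inj_on_image_set_diff[OF bij_betw_imp_inj_on[OF bij]]) (auto simp: L)
  also have "\<dots> = L - {x, Max L}"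
    unfolding bij_betw_imp_surj_on[OF bij] using \<open>p y = x\<close> by blast
  finally have "p ` (L - {x, y}) = L - {x, Max L}" .
  moreover have "strict_mono_on (L - {x}) p"
    using strict_mono_on_pred_in[OF fin] unfolding Min p .
  moreover have "is_bucket_tree (bmap p t)" if "t \<in> set ts" for t
  proof (rule is_bucket_tree_bmap)
    show "is_bucket_tree t" using assms(1) that by simp
    have "blabels t \<subseteq> L - {x}" using that above B(2) unfolding L U_def by fastforce
    then show "strict_mono_on (blabels t) p"
      by (rule monotone_on_subset[OF \<open>strict_mono_on (L - {x}) p\<close>])
  qed
  ultimately show thesis
    using that B fin Min succ U Max unfolding U_def by fastforce
qed

lemma diamond_of_BNode_not_singleton:
  "card B \<noteq> 1 \<Longrightarrow> diamond_of (BNode B ts) =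
     Dia (Min (blabels (BNode B ts))) (Max (blabels (BNode B ts)))
       (map (diamond_of \<circ> bmap (pred_in (blabels (BNode B ts)))) ts)"
  by (simp add: Let_def comp_def del: blabels.simps)

lemma dlabels_diamond_of: "is_bucket_tree T \<Longrightarrow> dlabels (diamond_of T) = blabels T"
proof (induction T rule: diamond_of.induct)
  case (1 B ts)
  show ?case
  proof (cases "card B = 1")
    case True
    with "1.prems" show ?thesis by (auto simp: card_1_singleton_iff)
  next
    case False
    define L where "L = blabels (BNode B ts)"
    define p where "p = pred_in L"
    obtain x y where facts: "B = {x, y}" "finite L" "Min L = x" "succ_in L x = y"
      "(\<Union>t\<in>set ts. blabels t) = L - {x, y}" "strict_mono_on (L - {x}) p"
      "p ` (L - {x, y}) = L - {x, Max L}" "x < Max L" "Max L \<in> L"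
      "\<And>t. t \<in> set ts \<Longrightarrow> is_bucket_tree (bmap p t)"
      using is_bucket_tree_BNode_labels[OF "1.prems" False, folded L_def, folded p_def] by blast
    have "x \<in> L" unfolding L_def facts(1) by simp
    have "dlabels (diamond_of (bmap p t)) = p ` blabels t" if "t \<in> set ts" for t
      using "1.IH"[OF False L_def that facts(10)[OF that, unfolded p_def]]
      by (simp add: p_def blabels_bmap)
    then have "dlabels (diamond_of (BNode B ts)) = {x, Max L} \<union> p ` (\<Union>t\<in>set ts. blabels t)"
      using facts(3)
      unfolding diamond_of_BNode_not_singleton[OF False] L_def[symmetric] p_def[symmetric]
      by (simp add: image_UN)
    also have "\<dots> = L"
      using facts(5,7-9) \<open>x \<in> L\<close> by auto
    finally show ?thesis unfolding L_def .
  qed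
qed

lemma is_diamond_diamond_of: "is_bucket_tree T \<Longrightarrow> is_diamond (diamond_of T)"
proof (induction T rule: diamond_of.induct)
  case (1 B ts)
  show ?case
  proof (cases "card B = 1")
    case False
    define L where "L = blabels (BNode B ts)"
    define p where "p = pred_in L"
    obtain x y where facts: "B = {x, y}" "finite L" "Min L = x" "succ_in L x = y"
      "(\<Union>t\<in>set ts. blabels t) = L - {x, y}" "strict_mono_on (L - {x}) p"
      "p ` (L - {x, y}) = L - {x, Max L}" "x < Max L" "Max L \<in> L"
      "\<And>t. t \<in> set ts \<Longrightarrow> is_bucket_tree (bmap p t)"
      using is_bucket_tree_BNode_labels[OF "1.prems" False, folded L_def, folded p_def] by blast
    have children: "dlabels (diamond_of (bmap p t)) = p ` blabels t" if "t \<in> set ts" for t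
      using facts(10)[OF that] by (simp add: dlabels_diamond_of blabels_bmap)
    have "x < z \<and> z < Max L" if "t \<in> set ts" "z \<in> p ` blabels t" for t z
    proof -
      have "z \<in> L - {x, Max L}" using that facts(5,7) by blast
      then show ?thesis using facts(2,3) by (auto simp: order.not_eq_order_implies_strict)
    qed
    moreover have "p ` blabels (ts ! i) \<inter> p ` blabels (ts ! j) = {}"
      if "i < length ts" "j < length ts" "i \<noteq> j" for i j
    proof (rule disjoint_nth_image[OF _ _ that])
      show "inj_on p (\<Union>t\<in>set ts. blabels t)"
        unfolding facts(5) using strict_mono_on_imp_inj_on[OF facts(6)] by (rule inj_on_subset) blast
    qed (use "1.prems" in simp)
    moreover have "is_diamond (diamond_of (bmap p t))" if "t \<in> set ts" for t
      using "1.IH"[OF False L_def that facts(10)[OF that, unfolded p_def]] by (simp add: p_def)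
    ultimately show ?thesis
      using facts(3,8) children
      unfolding diamond_of_BNode_not_singleton[OF False] L_def[symmetric] p_def[symmetric]
      by simp
  qed simp
qed

lemma diamond_of_btree_of: "is_diamond F \<Longrightarrow> diamond_of (btree_of F) = F"
proof (induction F)
  case (Dia a b Fs)
  define L where "L = dlabels (Dia a b Fs)"
  define s where "s = succ_in L"
  note facts = btree_of_Dia[OF Dia.prems, folded L_def, folded s_def]
  note L = is_diamond_Dia_labels[OF Dia.prems, folded L_def]
  have labels: "blabels (btree_of (Dia a b Fs)) = L"
    unfolding L_def using Dia.prems by (rule blabels_btree_of)
  have "(diamond_of \<circ> bmap (pred_in L)) (bmap s (btree_of G)) = G" if "G \<in> set Fs" for G
  proof -
    have "pred_in L (s z) = z" if "z \<in> blabels (btree_of G)" for z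
    proof -
      have "z \<in> L" "z < b"
        using that facts(6)[OF \<open>G \<in> set Fs\<close>] Dia.prems \<open>G \<in> set Fs\<close>
        by (auto simp: blabels_btree_of)
      moreover have "b \<in> L" unfolding L_def by simp
      ultimately show ?thesis unfolding s_def by (intro pred_in_succ_in[OF L(1)])
    qed
    then have "bmap (pred_in L) (bmap s (btree_of G)) = btree_of G"
      by (simp add: bmap_comp bmap_id_on)
    then show ?thesis using Dia that by simp
  qed
  then show ?case
    using facts(3) L(2,3) labels unfolding facts(1)
    by (simp add: diamond_of_BNode_not_singleton map_idI del: blabels.simps)
qed simp

lemma btree_of_diamond_of: "is_bucket_tree T \<Longrightarrow> btree_of (diamond_of T) = T"
proof (induction T rule: diamond_of.induct)
  case (1 B ts)
  show ?case
  proof (cases "card B = 1")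
    case True
    with "1.prems" show ?thesis by (auto simp: card_1_singleton_iff)
  next
    case False
    define L where "L = blabels (BNode B ts)"
    define p where "p = pred_in L"
    obtain x y where facts: "B = {x, y}" "finite L" "Min L = x" "succ_in L x = y"
      "(\<Union>t\<in>set ts. blabels t) = L - {x, y}" "strict_mono_on (L - {x}) p"
      "p ` (L - {x, y}) = L - {x, Max L}" "x < Max L" "Max L \<in> L"
      "\<And>t. t \<in> set ts \<Longrightarrow> is_bucket_tree (bmap p t)"
      using is_bucket_tree_BNode_labels[OF "1.prems" False, folded L_def, folded p_def] by blast
    have "x \<in> L" unfolding L_def facts(1) by simp
    have eq: "diamond_of (BNode B ts) = Dia x (Max L) (map (diamond_of \<circ> bmap p) ts)"
      using facts(3)
      unfolding diamond_of_BNode_not_singleton[OF False] L_def[symmetric] p_def[symmetric]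
      by simp
    have labels: "dlabels (diamond_of (BNode B ts)) = L"
      unfolding L_def using "1.prems" by (rule dlabels_diamond_of)
    have "(bmap (succ_in L) \<circ> btree_of) ((diamond_of \<circ> bmap p) t) = t" if "t \<in> set ts" for t
    proof -
      have "succ_in L (p z) = z" if "z \<in> blabels t" for z
      proof -
        have "z \<in> L - {x, y}" using that \<open>t \<in> set ts\<close> facts(5) by blast
        then have "z \<in> L" "x < z"
          using Min_le[OF facts(2), of z] facts(3) by auto
        then show ?thesis unfolding p_def by (intro succ_in_pred_in[OF facts(2) \<open>x \<in> L\<close>])
      qed
      then have "bmap (succ_in L) (bmap p t) = t" by (simp add: bmap_comp bmap_id_on)
      then show ?thesis
        using "1.IH"[OF False L_def that facts(10)[OF that, unfolded p_def]] by (simp add: p_def)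
    qed
    then show ?thesis
      using labels facts(1,4) unfolding eq by (simp add: map_idI)
  qed
qed

lemma sum_dweight_eq_sum_bweight:
  "(\<Sum>F\<in>{F \<in> diamonds_of_size n. P (inner_nodes F)}. dweight \<phi> F)
     = (\<Sum>T\<in>{T \<in> bucket_trees_of_size n. P (cap_one_nodes T)}. bweight \<phi> T)"
proof (rule sum.reindex_bij_witness[where i = diamond_of and j = btree_of])
  fix F assume "F \<in> {F \<in> diamonds_of_size n. P (inner_nodes F)}"
  then have F: "is_diamond F" "dlabels F = {1..int n}" "P (inner_nodes F)"
    by (auto simp: diamonds_of_size_def)
  show "diamond_of (btree_of F) = F" using F(1) by (rule diamond_of_btree_of)
  show "btree_of F \<in> {T \<in> bucket_trees_of_size n. P (cap_one_nodes T)}"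
    using F by (simp add: bucket_trees_of_size_def is_bucket_tree_btree_of blabels_btree_of
        cap_one_nodes_btree_of)
  show "bweight \<phi> (btree_of F) = dweight \<phi> F" using F(1) by (rule bweight_btree_of)
next
  fix T assume "T \<in> {T \<in> bucket_trees_of_size n. P (cap_one_nodes T)}"
  then have T: "is_bucket_tree T" "blabels T = {1..int n}" "P (cap_one_nodes T)"
    by (auto simp: bucket_trees_of_size_def)
  show "btree_of (diamond_of T) = T" using T(1) by (rule btree_of_diamond_of)
  have "inner_nodes (diamond_of T) = cap_one_nodes T"
    using cap_one_nodes_btree_of[OF is_diamond_diamond_of[OF T(1)]] btree_of_diamond_of[OF T(1)]
    by simp
  then show "diamond_of T \<in> {F \<in> diamonds_of_size n. P (inner_nodes F)}"
    using T by (simp add: diamonds_of_size_def is_diamond_diamond_of dlabels_diamond_of)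
qed

theorem mainTheorem3:
  fixes \<phi> :: "nat \<Rightarrow> real"
  assumes "\<And>k. \<phi> k \<ge> 0" and "\<phi> 0 > 0"
  shows "(\<forall>F. is_diamond F \<longrightarrow> inner_nodes F = cap_one_nodes (M F))
    \<and> (\<forall>n::nat. n \<ge> 1 \<longrightarrow> (\<forall>k::nat.
         (\<Sum>F\<in>{F\<in>diamonds_of_size n. inner_nodes F = k}. dweight \<phi> F)
           / (\<Sum>F\<in>diamonds_of_size n. dweight \<phi> F)
       = (\<Sum>T\<in>{T\<in>bucket_trees_of_size n. cap_one_nodes T = k}. bweight \<phi> T)
           / (\<Sum>T\<in>bucket_trees_of_size n. bweight \<phi> T)))"
proof (intro conjI allI impI)
  fix F assume "is_diamond F"
  then show "inner_nodes F = cap_one_nodes (M F)" by (rule inner_nodes_eq_cap_one_nodes_M)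
next
  fix n k :: nat
  have "(\<Sum>F\<in>diamonds_of_size n. dweight \<phi> F) = (\<Sum>T\<in>bucket_trees_of_size n. bweight \<phi> T)"
    using sum_dweight_eq_sum_bweight[where P = "\<lambda>_. True"] by simp
  moreover have "(\<Sum>F\<in>{F\<in>diamonds_of_size n. inner_nodes F = k}. dweight \<phi> F)
      = (\<Sum>T\<in>{T\<in>bucket_trees_of_size n. cap_one_nodes T = k}. bweight \<phi> T)"
    by (rule sum_dweight_eq_sum_bweight)
  ultimately show "(\<Sum>F\<in>{F\<in>diamonds_of_size n. inner_nodes F = k}. dweight \<phi> F)
           / (\<Sum>F\<in>diamonds_of_size n. dweight \<phi> F)
       = (\<Sum>T\<in>{T\<in>bucket_trees_of_size n. cap_one_nodes T = k}. bweight \<phi> T)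
           / (\<Sum>T\<in>bucket_trees_of_size n. bweight \<phi> T)" by simp
qed

end
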